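(* Let $n\geq 2$, $m\geq 1$, $r\geq 3$ be integers and let $\alpha$ be an integer with $1\leq\alpha<(m+1)^n$. Then $\Gamma_n^{\alpha,r}$ is homotopy equivalent to the induced subcomplex of $\Gamma_n^{\alpha,r}$ on the vertex set $\{x\in V(\Gamma_n^{\alpha,r}) : |x_i|\leq\lfloor r/2\rfloor \text{ and } |x_j|+|x_k|\leq\lceil r/2\rceil \text{ for all } i,j,k\in[n],\ j\neq k\}$.
   Context: $[n]=\{1,\ldots,n\}$. $\mathbb{Z}^n$ carries the Manhattan metric $d(x,y)=\sum_i|x_i-y_i|$; for $X\subseteq\mathbb{Z}^n$, $\mathrm{VR}(X;r)$ is the simplicial complex on $X$ whose simplices are finite subsets of diameter at most $r$. Let $\prec$ be the anti-lexicographic order on $\mathbb{Z}^n$: $x\prec y$ iff at the largest index $i$ with $x_i\neq y_i$ one has $x_i<y_i$. Let $V_m=\{0,\ldots,m\}^n$. Let $H$ be $V_m$ with its first $\alpha$ elements (with respect to $\prec$) removed, $\delta$ the $\prec$-least element of $H$, and $Y=\{x-\delta: x\in H\}$ (so $\mathbf{0}$ is the least element of $Y$). Then $\Gamma_n^{\alpha,r}$ is the link of $\mathbf{0}$ in $\mathrm{VR}(Y;r)$, i.e. the complex of simplices $\tau$ of $\mathrm{VR}(Y;r)$ with $\mathbf{0}\notin\tau$ and $\tau\cup\{\mathbf{0}\}\in\mathrm{VR}(Y;r)$. The induced subcomplex of $K$ on a vertex set $W$ consists of the simplices of $K$ contained in $W$. *)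

theory Defs
  imports "HOL-Analysis.Analysis"
begin

text \<open>Points of Z^n are int lists of length n; coordinate i in [n] is entry i-1.\<close>

definition manhattan :: "int list \<Rightarrow> int list \<Rightarrow> int" where
  "manhattan x y = sum_list (map2 (\<lambda>a b. \<bar>a - b\<bar>) x y)"

definition antilex_less :: "int list \<Rightarrow> int list \<Rightarrow> bool" where
  "antilex_less x y \<longleftrightarrow> length x = length y \<and>
     (\<exists>i<length x. x ! i < y ! i \<and> (\<forall>j. i < j \<and> j < length x \<longrightarrow> x ! j = y ! j))"

definition cube :: "nat \<Rightarrow> nat \<Rightarrow> int list set" where
  "cube n m = {x. length x = n \<and> (\<forall>i<n. 0 \<le> x ! i \<and> x ! i \<le> int m)}"

text \<open>V_m with its first alpha elements (w.r.t. anti-lex order) removed.\<close>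
definition cube_removed :: "nat \<Rightarrow> nat \<Rightarrow> nat \<Rightarrow> int list set" where
  "cube_removed n m \<alpha> = {x \<in> cube n m. \<alpha> \<le> card {y \<in> cube n m. antilex_less y x}}"

definition least_elem :: "int list set \<Rightarrow> int list" where
  "least_elem H = (THE d. d \<in> H \<and> (\<forall>y\<in>H. y \<noteq> d \<longrightarrow> antilex_less d y))"

definition shifted :: "nat \<Rightarrow> nat \<Rightarrow> nat \<Rightarrow> int list set" where
  "shifted n m \<alpha> = (\<lambda>x. map2 (-) x (least_elem (cube_removed n m \<alpha>))) ` cube_removed n m \<alpha>"

definition VR :: "int list set \<Rightarrow> int \<Rightarrow> int list set set" where
  "VR X r = {\<sigma>. \<sigma> \<noteq> {} \<and> finite \<sigma> \<and> \<sigma> \<subseteq> X \<and> (\<forall>x\<in>\<sigma>. \<forall>y\<in>\<sigma>. manhattan x y \<le> r)}"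

definition link :: "'v set set \<Rightarrow> 'v \<Rightarrow> 'v set set" where
  "link K v = {\<tau> \<in> K. v \<notin> \<tau> \<and> insert v \<tau> \<in> K}"

definition Gamma :: "nat \<Rightarrow> nat \<Rightarrow> nat \<Rightarrow> int \<Rightarrow> int list set set" where
  "Gamma n m \<alpha> r = link (VR (shifted n m \<alpha>) r) (replicate n 0)"

definition vertices :: "'v set set \<Rightarrow> 'v set" where
  "vertices K = {v. {v} \<in> K}"

definition induced :: "'v set set \<Rightarrow> 'v set \<Rightarrow> 'v set set" where
  "induced K W = {\<sigma> \<in> K. \<sigma> \<subseteq> W}"

definition geom_real :: "'v set set \<Rightarrow> ('v \<Rightarrow> real) topology" where
  "geom_real K = subtopology (powertop_real UNIV)
     {f. (\<forall>v. 0 \<le> f v) \<and> (\<exists>\<sigma>\<in>K. {v. f v \<noteq> 0} \<subseteq> \<sigma> \<and> sum f \<sigma> = 1)}"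

end

theory Submission
  imports Defs
begin

text \<open>The vertices of \<open>Gamma\<close> are the nonzero points \<open>y\<close> of the shifted cube with
  \<open>|y|\<^sub>1 \<le> r\<close>. They are all anti-lexicographically positive, and since the removed initial
  segment of the cube is closed downwards, a positive point of the box spanned by the origin
  and a vertex is again a vertex. If a vertex \<open>y\<close> violates the coordinate bounds, lowering
  the absolute value of one or two large coordinates by one yields such a point \<open>w\<close> with
  smaller norm, and every vertex within distance \<open>r\<close> of \<open>y\<close> is within distance \<open>r\<close> of
  \<open>w\<close>. So \<open>y\<close> is dominated by \<open>w\<close> in the Vietoris-Rips complex and can be deleted without
  changing the homotopy type; deleting such vertices in order of decreasing norm leaves the
  induced subcomplex.\<close>

section \<open>Dominated vertices\<close>

definition simplicial_complex :: "'v set set \<Rightarrow> bool" where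
  "simplicial_complex K \<longleftrightarrow>
     (\<forall>\<sigma>\<in>K. finite \<sigma>) \<and> (\<forall>\<sigma>\<in>K. \<forall>\<tau>. \<tau> \<subseteq> \<sigma> \<longrightarrow> \<tau> \<noteq> {} \<longrightarrow> \<tau> \<in> K)"

definition deletion :: "'v set set \<Rightarrow> 'v \<Rightarrow> 'v set set" where
  "deletion K v = {\<sigma> \<in> K. v \<notin> \<sigma>}"

definition move_mass :: "'v \<Rightarrow> 'v \<Rightarrow> real \<Rightarrow> ('v \<Rightarrow> real) \<Rightarrow> 'v \<Rightarrow> real" where
  "move_mass v w s f u =
     f u - (if u = v then s * f v else 0) + (if u = w then s * f v else 0)"

lemma topspace_geom_real:
  "topspace (geom_real K) =
     {f. (\<forall>v. 0 \<le> f v) \<and> (\<exists>\<sigma>\<in>K. {v. f v \<noteq> 0} \<subseteq> \<sigma> \<and> sum f \<sigma> = 1)}"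
  by (simp add: geom_real_def)

lemma continuous_map_geom_real_iff:
  "continuous_map X (geom_real K) g \<longleftrightarrow>
     continuous_map X (powertop_real UNIV) g \<and> g ` topspace X \<subseteq> topspace (geom_real K)"
  by (auto simp: geom_real_def continuous_map_in_subtopology)

lemma continuous_map_geom_real_id: "continuous_map (geom_real K) (powertop_real UNIV) id"
  unfolding geom_real_def by (intro continuous_map_from_subtopology continuous_map_id)

lemma continuous_map_move_mass:
  "continuous_map (prod_topology euclideanreal (powertop_real UNIV)) (powertop_real UNIV)
     (\<lambda>(s, f). move_mass v w s f)"
  unfolding continuous_map_componentwise_UNIV
proof
  fix u
  have coord: "continuous_map (prod_topology euclideanreal (powertop_real UNIV)) euclideanreal
      (\<lambda>x. snd x u')" for u'
    using continuous_map_compose[OF continuous_map_snd continuous_map_product_projection[OF UNIV_I]]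
    by (simp add: o_def)
  show "continuous_map (prod_topology euclideanreal (powertop_real UNIV)) euclideanreal
      (\<lambda>x. (case x of (s, f) \<Rightarrow> move_mass v w s f) u)"
    by (cases "u = v"; cases "u = w")
      (simp_all add: move_mass_def case_prod_unfold coord continuous_map_fst continuous_intros)
qed

lemma move_mass_in_geom_real:
  fixes K :: "'v set set"
  assumes K: "simplicial_complex K"
    and dominated: "\<And>\<sigma>. \<sigma> \<in> K \<Longrightarrow> v \<in> \<sigma> \<Longrightarrow> insert w \<sigma> \<in> K"
    and "v \<noteq> w" and s: "0 \<le> s" "s \<le> 1"
    and f: "f \<in> topspace (geom_real K)"
  shows "move_mass v w s f \<in> topspace (geom_real K)"
proof -
  obtain \<sigma> where \<sigma>: "\<sigma> \<in> K" "{u. f u \<noteq> 0} \<subseteq> \<sigma>" "sum f \<sigma> = 1"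
    and nonneg: "\<And>u. 0 \<le> f u"
    using f by (auto simp: topspace_geom_real)
  have fin: "finite \<sigma>" using K \<sigma>(1) by (simp add: simplicial_complex_def)
  let ?g = "move_mass v w s f"
  have "0 \<le> ?g u" for u
    using \<open>v \<noteq> w\<close> nonneg[of u] nonneg[of v] s mult_left_le_one_le[of "f v" s]
    by (auto simp: move_mass_def)
  moreover have "\<exists>\<tau>\<in>K. {u. ?g u \<noteq> 0} \<subseteq> \<tau> \<and> sum ?g \<tau> = 1"
  proof (cases "f v = 0")
    case True
    then have "?g = f" using \<open>v \<noteq> w\<close> by (simp add: move_mass_def fun_eq_iff)
    then show ?thesis using \<sigma> by auto
  next
    case False
    then have "v \<in> \<sigma>" using \<sigma>(2) by blast
    have "sum ?g (insert w \<sigma>) = sum f (insert w \<sigma>)"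
      using fin \<open>v \<in> \<sigma>\<close> by (simp add: move_mass_def sum.distrib sum_subtractf)
    also have "\<dots> = 1"
      using fin \<sigma>(2,3) by (cases "w \<in> \<sigma>") (auto simp: insert_absorb)
    finally show ?thesis
      using dominated[OF \<sigma>(1) \<open>v \<in> \<sigma>\<close>] \<sigma>(2)
      by (intro bexI[of _ "insert w \<sigma>"]) (auto simp: move_mass_def split: if_splits)
  qed
  ultimately show ?thesis by (simp add: topspace_geom_real)
qed

lemma move_mass_in_geom_real_deletion:
  fixes K :: "'v set set"
  assumes K: "simplicial_complex K"
    and dominated: "\<And>\<sigma>. \<sigma> \<in> K \<Longrightarrow> v \<in> \<sigma> \<Longrightarrow> insert w \<sigma> \<in> K"
    and "v \<noteq> w" and f: "f \<in> topspace (geom_real K)"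
  shows "move_mass v w 1 f \<in> topspace (geom_real (deletion K v))"
proof -
  let ?g = "move_mass v w 1 f"
  obtain \<tau> where \<tau>: "\<tau> \<in> K" "{u. ?g u \<noteq> 0} \<subseteq> \<tau>" "sum ?g \<tau> = 1"
    and nonneg: "\<And>u. 0 \<le> ?g u"
    using move_mass_in_geom_real[OF K dominated \<open>v \<noteq> w\<close> _ _ f, of 1]
    by (auto simp: topspace_geom_real)
  have "?g v = 0" using \<open>v \<noteq> w\<close> by (simp add: move_mass_def)
  then have sum: "sum ?g (\<tau> - {v}) = 1"
    using \<tau>(3) K \<tau>(1) by (cases "v \<in> \<tau>") (auto simp: sum_diff1 simplicial_complex_def)
  then have "\<tau> - {v} \<noteq> {}" by (metis sum.empty zero_neq_one)
  then have "\<tau> - {v} \<in> deletion K v"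
    using K \<tau>(1) by (auto simp: deletion_def simplicial_complex_def)
  moreover have "{u. ?g u \<noteq> 0} \<subseteq> \<tau> - {v}" using \<tau>(2) \<open>?g v = 0\<close> by auto
  ultimately show ?thesis using sum nonneg by (auto simp: topspace_geom_real)
qed

text \<open>Sliding the barycentric weight of \<open>v\<close> onto \<open>w\<close> is a deformation retraction onto
  the deletion of \<open>v\<close>.\<close>

lemma homotopy_equivalent_deletion_dominated:
  fixes K :: "'v set set"
  assumes K: "simplicial_complex K"
    and dominated: "\<And>\<sigma>. \<sigma> \<in> K \<Longrightarrow> v \<in> \<sigma> \<Longrightarrow> insert w \<sigma> \<in> K"
    and "v \<noteq> w"
  shows "geom_real K homotopy_equivalent_space geom_real (deletion K v)"
proof (rule deformation_retract_imp_homotopy_equivalent_space)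
  let ?X = "geom_real K" and ?Y = "geom_real (deletion K v)"
  have YX: "topspace ?Y \<subseteq> topspace ?X"
    by (auto simp: topspace_geom_real deletion_def)
  have "continuous_map (prod_topology euclideanreal (powertop_real UNIV))
      (prod_topology euclideanreal (powertop_real UNIV)) (\<lambda>(t, f). (1 - t, f))"
    unfolding case_prod_unfold by (intro continuous_map_pairedI continuous_intros)
  from continuous_map_compose[OF this continuous_map_move_mass]
  have "continuous_map (prod_topology (top_of_set {0..1}) ?X) (powertop_real UNIV)
      (\<lambda>(t, f). move_mass v w (1 - t) f)"
    unfolding geom_real_def subtopology_Times[symmetric]
    by (intro continuous_map_from_subtopology) (simp add: o_def case_prod_unfold)
  moreover have "move_mass v w (1 - t) f \<in> topspace ?X" if "t \<in> {0..1}" "f \<in> topspace ?X" for t f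
    using move_mass_in_geom_real[OF K dominated \<open>v \<noteq> w\<close> _ _ that(2)] that(1) by simp
  ultimately have "continuous_map (prod_topology (top_of_set {0..1}) ?X) ?X
      (\<lambda>(t, f). move_mass v w (1 - t) f)"
    by (auto simp: continuous_map_geom_real_iff)
  moreover have "move_mass v w 0 = id" by (simp add: move_mass_def fun_eq_iff)
  ultimately show "homotopic_with (\<lambda>x. True) ?X ?X (move_mass v w 1) id"
    unfolding homotopic_with_def
    by (intro exI[of _ "\<lambda>(t, f). move_mass v w (1 - t) f"]) auto
  have "continuous_map ?X (prod_topology euclideanreal (powertop_real UNIV)) (\<lambda>f. (1, f))"
    using continuous_map_geom_real_id by (intro continuous_map_pairedI) (auto simp: id_def)
  from continuous_map_compose[OF this continuous_map_move_mass]
  have "continuous_map ?X (powertop_real UNIV) (move_mass v w 1)"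
    by (simp add: o_def)
  moreover note continuous_map_geom_real_id
  moreover have "move_mass v w 1 f = f" if "f \<in> topspace ?Y" for f
  proof -
    have "f v = 0" using that by (fastforce simp: topspace_geom_real deletion_def)
    then show ?thesis using \<open>v \<noteq> w\<close> by (simp add: move_mass_def fun_eq_iff)
  qed
  ultimately show "retraction_maps ?X ?Y (move_mass v w 1) id"
    using move_mass_in_geom_real_deletion[OF K dominated \<open>v \<noteq> w\<close>] YX
    by (auto simp: retraction_maps_def continuous_map_geom_real_iff[of ?X]
        continuous_map_geom_real_iff[of ?Y])
qed


section \<open>Vietoris-Rips complexes\<close>

lemma manhattan_commute: "manhattan x y = manhattan y x"
proof (induction x arbitrary: y)
  case (Cons a x)
  then show ?case by (cases y) (simp_all add: manhattan_def abs_minus_commute)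
qed (simp add: manhattan_def)

lemma manhattan_self [simp]: "manhattan x x = 0"
  by (induction x) (simp_all add: manhattan_def)

lemma manhattan_conv_sum:
  "length x = length y \<Longrightarrow> manhattan x y = (\<Sum>l<length x. \<bar>x ! l - y ! l\<bar>)"
  by (simp add: manhattan_def sum_list_sum_nth atLeast0LessThan)

lemma simplicial_complex_VR: "simplicial_complex (VR X r)"
  by (auto simp: simplicial_complex_def VR_def intro: finite_subset)

lemma deletion_VR: "deletion (VR X r) v = VR (X - {v}) r"
  by (auto simp: deletion_def VR_def)

lemma vertices_VR: "0 \<le> r \<Longrightarrow> vertices (VR X r) = X"
  by (auto simp: vertices_def VR_def)

lemma induced_VR: "W \<subseteq> X \<Longrightarrow> induced (VR X r) W = VR W r"
  by (auto simp: induced_def VR_def)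

lemma link_VR:
  assumes "0 \<le> r"
  shows "link (VR X r) a = VR {x \<in> X. x \<noteq> a \<and> a \<in> X \<and> manhattan x a \<le> r} r"
  using assms by (auto simp: link_def VR_def manhattan_commute[of a])

lemma homotopy_equivalent_VR_delete_dominated:
  assumes "w \<in> X" "w \<noteq> v" "0 \<le> r"
    and dominated: "\<And>z. z \<in> X \<Longrightarrow> manhattan z v \<le> r \<Longrightarrow> manhattan z w \<le> r"
  shows "geom_real (VR X r) homotopy_equivalent_space geom_real (VR (X - {v}) r)"
proof -
  have "insert w \<sigma> \<in> VR X r" if "\<sigma> \<in> VR X r" "v \<in> \<sigma>" for \<sigma>
    using that assms dominated by (auto simp: VR_def manhattan_commute[of w])
  from homotopy_equivalent_deletion_dominated[OF simplicial_complex_VR this] \<open>w \<noteq> v\<close>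
  show ?thesis by (simp add: deletion_VR)
qed

text \<open>Deleting the vertices outside \<open>W\<close> in order of decreasing rank keeps every
  dominating vertex available, since it has smaller rank.\<close>

lemma homotopy_equivalent_VR_collapse:
  fixes rank :: "int list \<Rightarrow> 'a::linorder"
  assumes "finite X" "W \<subseteq> X" "0 \<le> r"
    and dominated: "\<And>v. v \<in> X - W \<Longrightarrow> \<exists>w\<in>X. rank w < rank v \<and>
                 (\<forall>z\<in>X. manhattan z v \<le> r \<longrightarrow> manhattan z w \<le> r)"
  shows "geom_real (VR X r) homotopy_equivalent_space geom_real (VR W r)"
  using assms
proof (induction "card (X - W)" arbitrary: X rule: less_induct)
  case less
  show ?case
  proof (cases "X = W")
    case True
    then show ?thesis by (simp add: homotopy_equivalent_space_refl)
  next
    case False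
    then have "X - W \<noteq> {}" using less.prems(2) by blast
    moreover have fin: "finite (rank ` (X - W))" using less.prems(1) by simp
    ultimately obtain v where v: "v \<in> X - W" "rank v = Max (rank ` (X - W))"
      by (metis (no_types, lifting) Max_in image_iff image_is_empty)
    then have v_max: "rank u \<le> rank v" if "u \<in> X - W" for u
      using that fin by simp
    obtain w where w: "w \<in> X" "rank w < rank v"
      and w_dom: "\<And>z. z \<in> X \<Longrightarrow> manhattan z v \<le> r \<Longrightarrow> manhattan z w \<le> r"
      using less.prems(4)[OF v(1)] by blast
    have "geom_real (VR X r) homotopy_equivalent_space geom_real (VR (X - {v}) r)"
      using w(2)
      by (intro homotopy_equivalent_VR_delete_dominated[OF w(1) _ less.prems(3) w_dom]) auto
    moreover have "geom_real (VR (X - {v}) r) homotopy_equivalent_space geom_real (VR W r)"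
    proof (rule less.hyps)
      show "card (X - {v} - W) < card (X - W)"
        using v less.prems(1) by (intro psubset_card_mono) auto
      fix v' assume v': "v' \<in> X - {v} - W"
      then obtain w' where "w' \<in> X" "rank w' < rank v'"
        and "\<forall>z\<in>X. manhattan z v' \<le> r \<longrightarrow> manhattan z w' \<le> r"
        using less.prems(4) by blast
      moreover have "w' \<noteq> v" using v_max[of v'] v' \<open>rank w' < rank v'\<close> by auto
      ultimately show "\<exists>w\<in>X - {v}. rank w < rank v' \<and>
          (\<forall>z\<in>X - {v}. manhattan z v' \<le> r \<longrightarrow> manhattan z w \<le> r)"
        by blast
    qed (use less.prems v in auto)
    ultimately show ?thesis by (rule homotopy_eqv_trans)
  qed
qed


section \<open>The anti-lexicographic order and the shifted cube\<close>

definition in_origin_box :: "int list \<Rightarrow> int list \<Rightarrow> bool" where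
  "in_origin_box w y \<longleftrightarrow> length w = length y \<and>
     (\<forall>l<length y. 0 \<le> w ! l \<and> w ! l \<le> y ! l \<or> y ! l \<le> w ! l \<and> w ! l \<le> 0)"

lemma antilex_less_irrefl: "\<not> antilex_less x x"
  by (auto simp: antilex_less_def)

lemma antilex_less_trans:
  assumes "antilex_less x y" "antilex_less y z"
  shows "antilex_less x z"
proof -
  obtain i where i: "length x = length y" "i < length x" "x ! i < y ! i"
    "\<forall>j. i < j \<and> j < length x \<longrightarrow> x ! j = y ! j"
    using assms(1) by (auto simp: antilex_less_def)
  obtain k where k: "length y = length z" "k < length y" "y ! k < z ! k"
    "\<forall>j. k < j \<and> j < length y \<longrightarrow> y ! j = z ! j"
    using assms(2) by (auto simp: antilex_less_def)
  show ?thesis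
    unfolding antilex_less_def using i k
    by (cases i k rule: linorder_cases) (auto intro!: exI[of _ "max i k"] simp: max_def)
qed

lemma antilex_less_linear:
  assumes "length x = length y" "x \<noteq> y"
  shows "antilex_less x y \<or> antilex_less y x"
proof -
  define D where "D = {i. i < length x \<and> x ! i \<noteq> y ! i}"
  have "D \<noteq> {}"
  proof
    assume "D = {}"
    then have "x = y" using assms(1) by (intro nth_equalityI) (auto simp: D_def)
    then show False using assms(2) by contradiction
  qed
  moreover have "finite D" by (simp add: D_def)
  ultimately have "Max D \<in> D" and "\<And>j. j \<in> D \<Longrightarrow> j \<le> Max D" by simp_all
  then have i: "Max D < length x" "x ! Max D \<noteq> y ! Max D"
    and above: "\<forall>j. Max D < j \<and> j < length x \<longrightarrow> x ! j = y ! j"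
    by (auto simp: D_def not_le[symmetric])
  show ?thesis
  proof (cases "x ! Max D < y ! Max D")
    case True
    then show ?thesis using i above assms(1) unfolding antilex_less_def by blast
  next
    case False
    then have "y ! Max D < x ! Max D" using i(2) by simp
    then show ?thesis using i above assms(1) unfolding antilex_less_def by auto
  qed
qed

lemma antilex_less_cong_diff:
  assumes "length a = length b" "length a' = length b'" "length a = length a'"
    and "\<And>i. i < length a \<Longrightarrow> b ! i - a ! i = b' ! i - a' ! i"
  shows "antilex_less a b \<longleftrightarrow> antilex_less a' b'"
proof -
  have "a ! i < b ! i \<longleftrightarrow> a' ! i < b' ! i" "a ! i = b ! i \<longleftrightarrow> a' ! i = b' ! i"
    if "i < length a" for i
    using assms(4)[OF that] by linarith+
  then show ?thesis using assms(1-3) unfolding antilex_less_def by metis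
qed

lemma ex_antilex_least:
  assumes "finite H" "H \<noteq> {}" "\<forall>x\<in>H. length x = n"
  shows "\<exists>d\<in>H. \<forall>y\<in>H. y \<noteq> d \<longrightarrow> antilex_less d y"
  using assms
proof (induction H rule: finite_ne_induct)
  case (insert x F)
  then obtain d where d: "d \<in> F" "\<forall>y\<in>F. y \<noteq> d \<longrightarrow> antilex_less d y" by auto
  with insert have "antilex_less x d \<or> antilex_less d x" by (intro antilex_less_linear) auto
  then show ?case
  proof
    assume "antilex_less x d"
    then show ?case using d by (auto intro: antilex_less_trans)
  qed (use d in auto)
qed simp

lemma least_elem_antilex_least:
  assumes "finite H" "H \<noteq> {}" "\<forall>x\<in>H. length x = n"
  shows "least_elem H \<in> H" and "\<And>y. y \<in> H \<Longrightarrow> y \<noteq> least_elem H \<Longrightarrow> antilex_less (least_elem H) y"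
proof -
  have "\<exists>!d. d \<in> H \<and> (\<forall>y\<in>H. y \<noteq> d \<longrightarrow> antilex_less d y)"
    using ex_antilex_least[OF assms] antilex_less_trans antilex_less_irrefl by metis
  then have "least_elem H \<in> H \<and> (\<forall>y\<in>H. y \<noteq> least_elem H \<longrightarrow> antilex_less (least_elem H) y)"
    unfolding least_elem_def by (rule theI')
  then show "least_elem H \<in> H" and "\<And>y. y \<in> H \<Longrightarrow> y \<noteq> least_elem H \<Longrightarrow> antilex_less (least_elem H) y"
    by auto
qed

lemma finite_cube: "finite (cube n m)"
proof -
  have "cube n m \<subseteq> {xs. set xs \<subseteq> {0..int m} \<and> length xs = n}"
    by (auto simp: cube_def in_set_conv_nth)
  then show ?thesis using finite_lists_length_eq[of "{0..int m}" n] finite_subset by blast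
qed

lemma cube_removed_upward_closed:
  assumes "x \<in> cube_removed n m \<alpha>" "y \<in> cube n m" "antilex_less x y"
  shows "y \<in> cube_removed n m \<alpha>"
proof -
  have "card {u \<in> cube n m. antilex_less u x} \<le> card {u \<in> cube n m. antilex_less u y}"
    using finite_cube assms(3) antilex_less_trans by (intro card_mono) auto
  then show ?thesis using assms(1,2) by (simp add: cube_removed_def)
qed

lemma shifted_cases:
  assumes "y \<in> shifted n m \<alpha>"
  obtains x \<delta> where "x \<in> cube_removed n m \<alpha>" "\<delta> \<in> cube_removed n m \<alpha>" "y = map2 (-) x \<delta>"
    and "\<delta> = least_elem (cube_removed n m \<alpha>)"
    and "\<And>x'. x' \<in> cube_removed n m \<alpha> \<Longrightarrow> x' \<noteq> \<delta> \<Longrightarrow> antilex_less \<delta> x'"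
proof -
  have "cube_removed n m \<alpha> \<subseteq> cube n m" by (auto simp: cube_removed_def)
  then have H: "finite (cube_removed n m \<alpha>)" "\<forall>x\<in>cube_removed n m \<alpha>. length x = n"
    using finite_cube by (auto simp: cube_def intro: finite_subset)
  from assms obtain x where "x \<in> cube_removed n m \<alpha>"
    "y = map2 (-) x (least_elem (cube_removed n m \<alpha>))"
    by (auto simp: shifted_def)
  with least_elem_antilex_least[OF H(1) _ H(2)] that show ?thesis by blast
qed

lemma length_shifted: "y \<in> shifted n m \<alpha> \<Longrightarrow> length y = n"
  by (erule shifted_cases) (auto simp: cube_removed_def cube_def)

lemma shifted_antilex_pos:
  assumes "y \<in> shifted n m \<alpha>" "y \<noteq> replicate n 0"
  shows "antilex_less (replicate n 0) y"
  using assms(1)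
proof (rule shifted_cases)
  fix x \<delta> assume x: "x \<in> cube_removed n m \<alpha>" and \<delta>: "\<delta> \<in> cube_removed n m \<alpha>"
    and y: "y = map2 (-) x \<delta>"
    and least: "\<And>x'. x' \<in> cube_removed n m \<alpha> \<Longrightarrow> x' \<noteq> \<delta> \<Longrightarrow> antilex_less \<delta> x'"
  have len: "length x = n" "length \<delta> = n"
    using x \<delta> by (auto simp: cube_removed_def cube_def)
  have "x \<noteq> \<delta>" using assms(2) y len by (auto intro: nth_equalityI)
  then have "antilex_less \<delta> x" using least x by blast
  moreover have "antilex_less \<delta> x \<longleftrightarrow> antilex_less (replicate n 0) y"
    using len y by (intro antilex_less_cong_diff) auto
  ultimately show ?thesis by simp
qed

lemma shifted_in_origin_box:
  assumes "y \<in> shifted n m \<alpha>" "in_origin_box w y" "antilex_less (replicate n 0) w"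
  shows "w \<in> shifted n m \<alpha>"
  using assms(1)
proof (rule shifted_cases)
  fix x \<delta> assume x: "x \<in> cube_removed n m \<alpha>" and \<delta>: "\<delta> \<in> cube_removed n m \<alpha>"
    and y: "y = map2 (-) x \<delta>" and \<delta>_def: "\<delta> = least_elem (cube_removed n m \<alpha>)"
  define x' where "x' = map2 (+) w \<delta>"
  have len: "length x = n" "length \<delta> = n" "length w = n" "length x' = n"
    using x \<delta> assms(2,3) by (auto simp: cube_removed_def cube_def antilex_less_def x'_def)
  have "0 \<le> x' ! l \<and> x' ! l \<le> int m" if "l < n" for l
    using that x \<delta> assms(2) len y
    by (fastforce simp: x'_def cube_removed_def cube_def in_origin_box_def)
  then have "x' \<in> cube n m" using len by (simp add: cube_def)
  moreover have "antilex_less \<delta> x'"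
    using assms(3) len by (subst antilex_less_cong_diff) (auto simp: x'_def)
  ultimately have "x' \<in> cube_removed n m \<alpha>" using \<delta> by (rule cube_removed_upward_closed[rotated])
  moreover have "w = map2 (-) x' \<delta>" using len by (auto intro: nth_equalityI simp: x'_def)
  ultimately show ?thesis by (auto simp: shifted_def \<delta>_def)
qed

lemma finite_shifted: "finite (shifted n m \<alpha>)"
proof -
  have "cube_removed n m \<alpha> \<subseteq> cube n m" by (auto simp: cube_removed_def)
  from finite_imageI[OF finite_subset[OF this finite_cube]] show ?thesis
    by (simp add: shifted_def)
qed


section \<open>Shrinking heavy coordinates\<close>

definition l1norm :: "int list \<Rightarrow> int" where
  "l1norm y = (\<Sum>l<length y. \<bar>y ! l\<bar>)"

definition core_point :: "nat \<Rightarrow> int \<Rightarrow> int list \<Rightarrow> bool" where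
  "core_point n r x \<longleftrightarrow> (\<forall>i<n. \<bar>x ! i\<bar> \<le> r div 2) \<and>
     (\<forall>j<n. \<forall>k<n. j \<noteq> k \<longrightarrow> \<bar>x ! j\<bar> + \<bar>x ! k\<bar> \<le> (r + 1) div 2)"

definition heavy_set :: "int list \<Rightarrow> nat set \<Rightarrow> bool" where
  "heavy_set y S \<longleftrightarrow> S \<noteq> {} \<and> card S \<le> 2 \<and> (\<forall>l\<in>S. l < length y \<and> y ! l \<noteq> 0) \<and>
     l1norm y + int (card S) \<le> 2 * (\<Sum>l\<in>S. \<bar>y ! l\<bar>)"

definition shrink :: "nat set \<Rightarrow> int list \<Rightarrow> int list" where
  "shrink S y = map (\<lambda>l. if l \<in> S then y ! l - sgn (y ! l) else y ! l) [0..<length y]"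

lemma length_shrink [simp]: "length (shrink S y) = length y"
  by (simp add: shrink_def)

lemma nth_shrink [simp]:
  "l < length y \<Longrightarrow> shrink S y ! l = (if l \<in> S then y ! l - sgn (y ! l) else y ! l)"
  by (simp add: shrink_def)

lemma manhattan_replicate_zero: "manhattan y (replicate (length y) 0) = l1norm y"
  by (simp add: manhattan_conv_sum l1norm_def)

lemma l1norm_nonneg: "0 \<le> l1norm y"
  by (simp add: l1norm_def sum_nonneg)

lemma l1norm_le_in_origin_box:
  assumes "in_origin_box w y"
  shows "l1norm w \<le> l1norm y"
proof -
  have "\<bar>w ! l\<bar> \<le> \<bar>y ! l\<bar>" if "l < length y" for l
    using assms that unfolding in_origin_box_def by (smt (verit, best))
  then show ?thesis
    using assms unfolding l1norm_def in_origin_box_def by (auto intro: sum_mono)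
qed

lemma in_origin_box_shrink: "in_origin_box (shrink S y) y"
  by (auto simp: in_origin_box_def sgn_if)

lemma l1norm_shrink:
  assumes "\<forall>l\<in>S. l < length y \<and> y ! l \<noteq> 0"
  shows "l1norm (shrink S y) = l1norm y - int (card S)"
proof -
  have "S \<subseteq> {..<length y}" using assms by auto
  have "l1norm (shrink S y) = (\<Sum>l<length y. \<bar>y ! l\<bar> - (if l \<in> S then 1 else 0))"
    unfolding l1norm_def using assms by (intro sum.cong) (auto simp: sgn_if)
  also have "\<dots> = l1norm y - int (card S)"
    using \<open>S \<subseteq> {..<length y}\<close> by (simp add: l1norm_def sum_subtractf sum.If_cases Int_absorb1)
  finally show ?thesis .
qed

text \<open>If \<open>z\<close> lies beyond \<open>y\<close> in every coordinate of \<open>S\<close>, the distance from \<open>z\<close> to the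
  shrunk point is at most \<open>|z|\<^sub>1 + |y|\<^sub>1 + |S| - 2 \<Sum>\<^sub>S |y\<^sub>l|\<close>, which heaviness bounds by
  \<open>|z|\<^sub>1\<close>. Otherwise some coordinate of \<open>S\<close> moves one step towards \<open>z\<close>, which makes up
  for the other one moving at most one step away.\<close>

lemma manhattan_shrink_le:
  assumes S: "heavy_set y S" and z: "length z = length y"
  shows "manhattan z (shrink S y) \<le> max (manhattan z y) (l1norm z)"
proof -
  let ?w = "shrink S y" and ?n = "length y"
  have Sn: "S \<subseteq> {..<?n}" and nz: "\<And>l. l \<in> S \<Longrightarrow> y ! l \<noteq> 0" and cS: "card S \<le> 2"
    using S by (auto simp: heavy_set_def)
  have dist: "manhattan z ?w = (\<Sum>l<?n. \<bar>z ! l - ?w ! l\<bar>)"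
    using z by (simp add: manhattan_conv_sum del: nth_shrink)
  define beyond where "beyond l \<longleftrightarrow> (0 < y ! l \<and> y ! l \<le> z ! l) \<or> (y ! l < 0 \<and> z ! l \<le> y ! l)" for l
  show ?thesis
  proof (cases "\<forall>l\<in>S. beyond l")
    case False
    then obtain l0 where l0: "l0 \<in> S" "\<not> beyond l0" by blast
    have "\<bar>z ! l - ?w ! l\<bar> \<le> \<bar>z ! l - y ! l\<bar> + (if l \<in> S then 1 else 0) - (if l = l0 then 2 else 0)"
      if "l < ?n" for l
      using that l0 nz[of l] by (auto simp: beyond_def sgn_if)
    then have "manhattan z ?w \<le>
        (\<Sum>l<?n. \<bar>z ! l - y ! l\<bar> + (if l \<in> S then 1 else 0) - (if l = l0 then 2 else 0))"
      unfolding dist by (intro sum_mono) simp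
    also have "\<dots> = manhattan z y + int (card S) - 2"
      using Sn l0 z
      by (auto simp: manhattan_conv_sum sum.distrib sum_subtractf sum.If_cases Int_absorb1)
    finally show ?thesis using cS by linarith
  next
    case True
    have "\<bar>z ! l - ?w ! l\<bar> \<le> \<bar>z ! l\<bar> + \<bar>y ! l\<bar> + (if l \<in> S then 1 - 2 * \<bar>y ! l\<bar> else 0)"
      if "l < ?n" for l
      using that True nz[of l] by (cases "l \<in> S") (auto simp: beyond_def sgn_if)
    then have "manhattan z ?w \<le> (\<Sum>l<?n. \<bar>z ! l\<bar> + \<bar>y ! l\<bar> + (if l \<in> S then 1 - 2 * \<bar>y ! l\<bar> else 0))"
      unfolding dist by (intro sum_mono) simp
    also have "\<dots> = l1norm z + l1norm y + int (card S) - 2 * (\<Sum>l\<in>S. \<bar>y ! l\<bar>)"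
      using Sn z by (simp add: l1norm_def sum.distrib sum.If_cases Int_absorb1 sum_subtractf
          sum_distrib_left)
    finally show ?thesis using S unfolding heavy_set_def by linarith
  qed
qed

lemma heavy_set_singleton:
  assumes "l < length y" "l1norm y < 2 * \<bar>y ! l\<bar>"
  shows "heavy_set y {l}"
  using assms l1norm_nonneg[of y] by (auto simp: heavy_set_def)

lemma heavy_set_pair:
  assumes "j < length y" "k < length y" "j \<noteq> k" "y ! j \<noteq> 0" "y ! k \<noteq> 0"
    and "l1norm y + 2 \<le> 2 * (\<bar>y ! j\<bar> + \<bar>y ! k\<bar>)"
  shows "heavy_set y {j, k}"
  using assms by (auto simp: heavy_set_def)

text \<open>The coordinate \<open>i\<close> will be the top nonzero one, which has to stay positive. The only
  obstacle is a large pair containing \<open>i\<close> with \<open>y ! i = 1\<close>: then the other coordinate equals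
  \<open>r / 2\<close>, and unless \<open>|y|\<^sub>1 < r\<close> it is paired with a third nonzero coordinate instead.\<close>

lemma ex_heavy_set_pair:
  assumes r: "3 \<le> r" and norm: "l1norm y \<le> r"
    and small: "\<And>l. l < length y \<Longrightarrow> \<bar>y ! l\<bar> \<le> r div 2"
    and jk: "j < length y" "k < length y" "j \<noteq> k" "(r + 1) div 2 < \<bar>y ! j\<bar> + \<bar>y ! k\<bar>"
    and i: "i < length y" "0 < y ! i"
  shows "\<exists>S. heavy_set y S \<and> (i \<notin> S \<or> 2 \<le> y ! i)"
proof -
  have nz: "y ! j \<noteq> 0" "y ! k \<noteq> 0"
    using jk small[of j] small[of k] by linarith+
  show ?thesis
  proof (cases "i \<in> {j, k} \<and> y ! i = 1")
    case False
    then show ?thesis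
      using i jk nz norm heavy_set_pair[OF jk(1-3) nz] by (intro exI[of _ "{j, k}"]) auto
  next
    case True
    then obtain q where q: "q < length y" "q \<noteq> i" "(r + 1) div 2 < \<bar>y ! q\<bar> + 1"
      using jk by auto
    then have half: "2 * \<bar>y ! q\<bar> = r" using small[OF q(1)] by linarith
    show ?thesis
    proof (cases "l1norm y < r")
      case True
      then show ?thesis using q half heavy_set_singleton[OF q(1)] by (intro exI[of _ "{q}"]) auto
    next
      case False
      have "\<exists>l<length y. l \<noteq> q \<and> l \<noteq> i \<and> y ! l \<noteq> 0"
      proof (rule ccontr)
        assume "\<not> ?thesis"
        then have "l1norm y = (\<Sum>l\<in>{q, i}. \<bar>y ! l\<bar>)"
          unfolding l1norm_def using q(1) i(1) by (intro sum.mono_neutral_right) auto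
        then show False using q(2) True half False r by auto
      qed
      then obtain l where l: "l < length y" "l \<noteq> q" "l \<noteq> i" "y ! l \<noteq> 0" by blast
      have "y ! q \<noteq> 0" using half r by auto
      then have "heavy_set y {q, l}"
        using half norm l q by (intro heavy_set_pair) auto
      then show ?thesis using q l by (intro exI[of _ "{q, l}"]) auto
    qed
  qed
qed

lemma ex_heavy_set:
  assumes r: "3 \<le> r" and norm: "l1norm y \<le> r" and "\<not> core_point (length y) r y"
    and i: "i < length y" "0 < y ! i"
  shows "\<exists>S. heavy_set y S \<and> (i \<notin> S \<or> 2 \<le> y ! i)"
proof (cases "\<exists>j<length y. r div 2 < \<bar>y ! j\<bar>")
  case True
  then obtain j where j: "j < length y" "r div 2 < \<bar>y ! j\<bar>" by blast
  then have "heavy_set y {j}" using norm by (intro heavy_set_singleton) auto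
  moreover have "i \<notin> {j} \<or> 2 \<le> y ! i" using j r i(2) by auto
  ultimately show ?thesis by blast
next
  case False
  then have small: "\<And>l. l < length y \<Longrightarrow> \<bar>y ! l\<bar> \<le> r div 2" by (meson not_less)
  with assms(3) obtain j k where "j < length y" "k < length y" "j \<noteq> k"
    "(r + 1) div 2 < \<bar>y ! j\<bar> + \<bar>y ! k\<bar>"
    by (auto simp: core_point_def not_le)
  from ex_heavy_set_pair[OF r norm small this i] show ?thesis .
qed

lemma ex_dominating_shrink:
  assumes "3 \<le> r" "l1norm y \<le> r" "\<not> core_point (length y) r y"
    and pos: "antilex_less (replicate (length y) 0) y"
  obtains w where "in_origin_box w y" "antilex_less (replicate (length y) 0) w"
    and "l1norm w < l1norm y"
    and "\<And>z. length z = length y \<Longrightarrow> manhattan z w \<le> max (manhattan z y) (l1norm z)"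
proof -
  obtain i where i: "i < length y" "0 < y ! i" and top: "\<And>j. i < j \<Longrightarrow> j < length y \<Longrightarrow> y ! j = 0"
    using pos by (auto simp: antilex_less_def)
  obtain S where S: "heavy_set y S" "i \<notin> S \<or> 2 \<le> y ! i"
    using ex_heavy_set[OF assms(1-3) i] by blast
  have "antilex_less (replicate (length y) 0) (shrink S y)"
    unfolding antilex_less_def using i top S(2) by (intro conjI exI[of _ i]) auto
  moreover have "l1norm (shrink S y) < l1norm y"
  proof -
    have "S \<noteq> {}" "S \<subseteq> {..<length y}" "\<forall>l\<in>S. l < length y \<and> y ! l \<noteq> 0"
      using S(1) by (auto simp: heavy_set_def)
    then show ?thesis using l1norm_shrink[of S y] by (simp add: card_gt_0_iff finite_subset)
  qed
  ultimately show ?thesis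
    using that in_origin_box_shrink manhattan_shrink_le[OF S(1)] by blast
qed


section \<open>The core of the link\<close>

lemma homotopy_equivalent_VR_core:
  assumes "finite N" "3 \<le> r"
    and N: "\<And>y. y \<in> N \<Longrightarrow> length y = n \<and> antilex_less (replicate n 0) y \<and> l1norm y \<le> r"
    and closed: "\<And>y w. y \<in> N \<Longrightarrow> in_origin_box w y \<Longrightarrow> antilex_less (replicate n 0) w \<Longrightarrow> w \<in> N"
  shows "geom_real (VR N r) homotopy_equivalent_space geom_real (VR {x \<in> N. core_point n r x} r)"
proof (rule homotopy_equivalent_VR_collapse[where rank = l1norm])
  fix y assume y: "y \<in> N - {x \<in> N. core_point n r x}"
  then have "length y = n" using N by blast
  with y N obtain w
    where w: "in_origin_box w y" "antilex_less (replicate n 0) w" "l1norm w < l1norm y"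
    and dom: "\<And>z. length z = n \<Longrightarrow> manhattan z w \<le> max (manhattan z y) (l1norm z)"
    using ex_dominating_shrink[OF \<open>3 \<le> r\<close>, of y] by auto
  have "manhattan z w \<le> r" if "z \<in> N" "manhattan z y \<le> r" for z
    using that N dom by fastforce
  then show "\<exists>w\<in>N. l1norm w < l1norm y \<and> (\<forall>z\<in>N. manhattan z y \<le> r \<longrightarrow> manhattan z w \<le> r)"
    using closed[OF _ w(1,2)] y w(3) by blast
qed (use assms in auto)

theorem lemma3p5:
  fixes n m \<alpha> :: nat and r :: int
  assumes "n \<ge> 2" and "m \<ge> 1" and "r \<ge> 3"
    and "1 \<le> \<alpha>" and "\<alpha> < (m + 1) ^ n"
  shows "geom_real (Gamma n m \<alpha> r) homotopy_equivalent_space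
           (geom_real (induced (Gamma n m \<alpha> r)
              {x \<in> vertices (Gamma n m \<alpha> r).
                 (\<forall>i<n. \<bar>x ! i\<bar> \<le> r div 2) \<and>
                 (\<forall>j<n. \<forall>k<n. j \<noteq> k \<longrightarrow> \<bar>x ! j\<bar> + \<bar>x ! k\<bar> \<le> (r + 1) div 2)}))"
proof -
  let ?Y = "shifted n m \<alpha>" and ?o = "replicate n 0 :: int list"
  define N where "N = {y \<in> ?Y. y \<noteq> ?o \<and> ?o \<in> ?Y \<and> manhattan y ?o \<le> r}"
  have r: "0 \<le> r" "3 \<le> r" using assms(3) by simp_all
  have Gamma: "Gamma n m \<alpha> r = VR N r"
    unfolding Gamma_def N_def by (rule link_VR[OF r(1)])
  have norm: "manhattan y ?o = l1norm y" if "y \<in> ?Y" for y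
    using manhattan_replicate_zero[of y] length_shifted[OF that] by simp
  have "geom_real (VR N r) homotopy_equivalent_space geom_real (VR {x \<in> N. core_point n r x} r)"
  proof (rule homotopy_equivalent_VR_core[OF _ r(2)])
    show "finite N" using finite_shifted by (simp add: N_def)
    show "length y = n \<and> antilex_less ?o y \<and> l1norm y \<le> r" if "y \<in> N" for y
      using that length_shifted shifted_antilex_pos norm by (auto simp: N_def)
    show "w \<in> N" if "y \<in> N" "in_origin_box w y" "antilex_less ?o w" for y w
      using that shifted_in_origin_box[of y n m \<alpha> w] l1norm_le_in_origin_box[of w y]
        norm[of y] norm[of w] antilex_less_irrefl[of ?o]
      by (auto simp: N_def)
  qed
  then show ?thesis
    using Gamma vertices_VR[OF r(1)] induced_VR[of "{x \<in> N. core_point n r x}" N r]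
    by (simp add: core_point_def)
qed

end
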